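(* Let $(X,\rho)$ be a compact metric space, $T\colon X\to X$ continuous, $d\ge2$, and $\lambda$ a non-atomic Borel probability measure on $X$ such that the product measure $\lambda_d$ on $X^d$ is conservative for $T_d=T\times\cdots\times T$. Then the set of $d$-tuples $(x_1,\dots,x_d)$ which are not asymptotic has full $\lambda_d$-measure.
   Context: A $d$-tuple $(x_1,\dots,x_d)$ is asymptotic if $\lim_{n\to\infty}\max_{i,j}\rho(T^n x_i,T^n x_j)=0$. A measure $m$ is conservative for a map $S$ if for every measurable $A$ with $m(A)>0$ there is $n>0$ with $m(A\cap S^n(A))>0$. *)

theory Defs
  imports "HOL-Probability.Probability"
begin

text \<open>The d-fold product map T x ... x T on d-tuples, represented as
  extensional functions on the index set {..<d} (as in the product measure PiM).\<close>
definition prod_map :: "nat \<Rightarrow> ('a \<Rightarrow> 'a) \<Rightarrow> (nat \<Rightarrow> 'a) \<Rightarrow> (nat \<Rightarrow> 'a)" where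
  "prod_map d T x = (\<lambda>i\<in>{..<d}. T (x i))"

definition asymptotic :: "('a::metric_space \<Rightarrow> 'a) \<Rightarrow> nat \<Rightarrow> (nat \<Rightarrow> 'a) \<Rightarrow> bool" where
  "asymptotic T d x \<longleftrightarrow>
     (\<lambda>n. Max {dist ((T ^^ n) (x i)) ((T ^^ n) (x j)) | i j. i < d \<and> j < d}) \<longlonglongrightarrow> 0"

text \<open>Since the forward image S^n(A) need not be measurable,
  "positive measure" is expressed as positive inner measure (it contains a measurable set of
  positive measure); for the (universally measurable) sets arising here this agrees with the
  completed measure.\<close>
definition conservative :: "'b measure \<Rightarrow> ('b \<Rightarrow> 'b) \<Rightarrow> bool" where
  "conservative m S \<longleftrightarrow>
     (\<forall>A \<in> sets m. emeasure m A > 0 \<longrightarrow>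
        (\<exists>n>0. \<exists>B \<in> sets m. B \<subseteq> A \<inter> (S ^^ n) ` A \<and> emeasure m B > 0))"

end

theory Submission
  imports Defs
begin

(* Let F n x be the diameter of the n-th image (T^n x_0, ..., T^n x_{d-1}) of a tuple.
   For eps > 0 and m, the "last exceedance" set D eps m of tuples with F m x > eps but
   F n x <= eps for all n > m is wandering: since F n (T_d^k x) = F (n + k) x, no tuple of
   D eps m is mapped back into D eps m by T_d^k with k > 0.  By conservativity every
   measurable wandering set is null.  An asymptotic tuple either has x_0 = x_1, which
   happens only on a null set because the factors are non-atomic, or satisfies
   F 0 x > 1/(j+1) for some j and then lies in some D (1/(j+1)) m, since F n x tends to 0.
   Hence the asymptotic tuples lie in a countable union of null sets. *)

section \<open>Measurability of distance conditions\<close>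

lemma compact_space_dense_sequence:
  assumes "compact (UNIV :: 'a::metric_space set)"
  obtains s :: "nat \<Rightarrow> 'a::metric_space" where "\<And>y e. 0 < e \<Longrightarrow> \<exists>k. dist y (s k) < e"
proof -
  have "\<forall>n::nat. \<exists>K. finite K \<and> (UNIV::'a set) \<subseteq> (\<Union>x\<in>K. ball x (1 / real (Suc n)))"
    using assms unfolding compact_eq_totally_bounded by simp
  then obtain K where K: "\<And>n. finite (K n)" "\<And>n. (UNIV::'a set) \<subseteq> (\<Union>x\<in>K n. ball x (1 / real (Suc n)))"
    by metis
  define D where "D = (\<Union>n. K n)"
  have countable: "countable D" unfolding D_def using K(1) by (simp add: countable_finite)
  show ?thesis
  proof
    fix y :: 'a and e :: real assume "0 < e"
    then obtain n where n: "1 / real (Suc n) < e" by (rule nat_approx_posE)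
    from K(2)[of n] obtain x where x: "x \<in> K n" "dist x y < 1 / real (Suc n)"
      by (meson UNIV_I UN_iff mem_ball subsetD)
    have "x \<in> D" using x unfolding D_def by auto
    then obtain k where "from_nat_into D k = x" using from_nat_into_surj[OF countable] by blast
    then show "\<exists>k. dist y (from_nat_into D k) < e" using x n by (metis dist_commute less_trans)
  qed
qed

lemma dist_gt_iff_dense_sequence:
  assumes dense: "\<And>y e. 0 < e \<Longrightarrow> \<exists>k. dist y (s k) < e"
  shows "\<epsilon> < dist a b \<longleftrightarrow> (\<exists>k. \<epsilon> < \<bar>dist a (s k) - dist b (s k)\<bar>)"
proof
  assume gt: "\<epsilon> < dist a b"
  then have "0 < (dist a b - \<epsilon>) / 2" by simp
  then obtain k where k: "dist b (s k) < (dist a b - \<epsilon>) / 2" using dense by blast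
  have "dist a b \<le> dist a (s k) + dist b (s k)" by (rule dist_triangle2)
  moreover have "2 * dist b (s k) < dist a b - \<epsilon>" using k by simp
  ultimately have "\<epsilon> < dist a (s k) - dist b (s k)" by linarith
  then show "\<exists>k. \<epsilon> < \<bar>dist a (s k) - dist b (s k)\<bar>" by (intro exI[of _ k]) linarith
next
  assume "\<exists>k. \<epsilon> < \<bar>dist a (s k) - dist b (s k)\<bar>"
  then obtain k where k: "\<epsilon> < \<bar>dist a (s k) - dist b (s k)\<bar>" by blast
  have "dist a (s k) \<le> dist a b + dist b (s k)" by (rule dist_triangle)
  moreover have "dist b (s k) \<le> dist a b + dist a (s k)" by (metis dist_commute dist_triangle)
  ultimately show "\<epsilon> < dist a b" using k by linarith
qed

text \<open>On a compact metric space with its Borel sets, the set where two measurable maps are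
  more than \<open>\<epsilon>\<close> apart is measurable.  (The pair map need not be measurable for the product
  \<open>\<sigma>\<close>-algebra, so this is reduced to countably many real-valued conditions.)\<close>
lemma measurable_dist_gt:
  fixes f g :: "'b \<Rightarrow> 'a::metric_space"
  assumes "compact (UNIV :: 'a set)" and M: "sets M = sets borel"
    and f: "f \<in> measurable N M" and g: "g \<in> measurable N M"
  shows "{x\<in>space N. \<epsilon> < dist (f x) (g x)} \<in> sets N"
proof -
  obtain s :: "nat \<Rightarrow> 'a" where dense: "\<And>y e. 0 < e \<Longrightarrow> \<exists>k. dist y (s k) < e"
    using compact_space_dense_sequence[OF assms(1)] by blast
  have dist_to: "(\<lambda>x. dist (h x) c) \<in> borel_measurable N" if "h \<in> measurable N M" for h c
  proof -
    have "(\<lambda>a. dist a c) \<in> borel_measurable M"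
      using borel_measurable_continuous_onI[OF continuous_on_dist[OF continuous_on_id continuous_on_const]]
        measurable_cong_sets[OF M refl] by blast
    with that show ?thesis by (rule measurable_comp[unfolded comp_def])
  qed
  have "{x\<in>space N. \<epsilon> < dist (f x) (g x)} =
      (\<Union>k. {x\<in>space N. \<epsilon> < \<bar>dist (f x) (s k) - dist (g x) (s k)\<bar>})"
    using dist_gt_iff_dense_sequence[OF dense] by blast
  also have "\<dots> \<in> sets N"
  proof (intro sets.countable_UN'')
    fix k
    note [measurable] = dist_to[OF f, of "s k"] dist_to[OF g, of "s k"]
    show "{x\<in>space N. \<epsilon> < \<bar>dist (f x) (s k) - dist (g x) (s k)\<bar>} \<in> sets N" by measurable
  qed simp
  finally show ?thesis .
qed

lemma measurable_product_diagonal: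
  assumes "compact (UNIV :: 'a::metric_space set)" and "sets M = sets borel"
    and "i \<in> I" "j \<in> I"
  shows "{x\<in>space (PiM I (\<lambda>_. M)). x i = x j} \<in> sets (PiM I (\<lambda>_. M :: 'a measure))"
proof -
  let ?P = "PiM I (\<lambda>_. M)"
  have "{x\<in>space ?P. x i = x j} = space ?P - {x\<in>space ?P. 0 < dist (x i) (x j)}" by auto
  also have "\<dots> \<in> sets ?P"
    by (rule sets.Diff[OF sets.top measurable_dist_gt[OF assms(1,2)
          measurable_component_singleton[OF assms(3)] measurable_component_singleton[OF assms(4)]]])
  finally show ?thesis .
qed

section \<open>Wandering sets and last exceedances\<close>

lemma conservative_wandering_null:
  assumes "conservative m S" and A: "A \<in> sets m"
    and wandering: "\<And>k. k > 0 \<Longrightarrow> A \<inter> (S ^^ k) ` A = {}"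
  shows "A \<in> null_sets m"
proof (rule ccontr)
  assume "A \<notin> null_sets m"
  then have "emeasure m A > 0" using A by (simp add: null_sets_def zero_less_iff_neq_zero)
  then obtain k B where "k > 0" "B \<subseteq> A \<inter> (S ^^ k) ` A" "emeasure m B > 0"
    using assms(1) A unfolding conservative_def by blast
  then show False using wandering by simp
qed

definition last_exceedance :: "(nat \<Rightarrow> 'b \<Rightarrow> real) \<Rightarrow> real \<Rightarrow> nat \<Rightarrow> 'b set" where
  "last_exceedance f \<epsilon> m = {x. \<epsilon> < f m x \<and> (\<forall>n>m. f n x \<le> \<epsilon>)}"

lemma last_exceedance_wandering:
  assumes shift: "\<And>n x. f n ((S ^^ k) x) = f (n + k) x" and "k > 0"
  shows "last_exceedance f \<epsilon> m \<inter> (S ^^ k) ` last_exceedance f \<epsilon> m = {}"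
proof -
  have False if "x \<in> last_exceedance f \<epsilon> m" "(S ^^ k) x \<in> last_exceedance f \<epsilon> m" for x
  proof -
    have "\<epsilon> < f (m + k) x" using that(2) shift[of m x] by (simp add: last_exceedance_def)
    moreover have "f (m + k) x \<le> \<epsilon>" using that(1) \<open>k > 0\<close> by (simp add: last_exceedance_def)
    ultimately show False by simp
  qed
  then show ?thesis by blast
qed

text \<open>A sequence tending to \<open>0\<close> exceeds a positive level only finitely often, so it has a last
  exceedance once it exceeds the level at all.\<close>
lemma last_exceedance_exists:
  assumes lim: "(\<lambda>n. f n x) \<longlonglongrightarrow> 0" and "\<epsilon> < f 0 x" and "0 < \<epsilon>"
  shows "\<exists>m. x \<in> last_exceedance f \<epsilon> m"
proof -
  define S where "S = {n. \<epsilon> < f n x}"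
  obtain N where N: "\<And>n. n \<ge> N \<Longrightarrow> f n x < \<epsilon>"
    using order_tendstoD(2)[OF lim \<open>0 < \<epsilon>\<close>] unfolding eventually_sequentially by blast
  have "S \<subseteq> {..<N}"
  proof
    fix n assume "n \<in> S"
    then have "\<not> f n x < \<epsilon>" unfolding S_def by simp
    then show "n \<in> {..<N}" using N[of n] by (cases "N \<le> n") auto
  qed
  then have finite: "finite S" by (rule finite_subset) simp
  have "0 \<in> S" unfolding S_def using assms(2) by simp
  then have "Max S \<in> S" using Max_in[OF finite] by blast
  then have "\<epsilon> < f (Max S) x" unfolding S_def by simp
  moreover have "f n x \<le> \<epsilon>" if "Max S < n" for n
    using Max_ge[OF finite, of n] that unfolding S_def by force
  ultimately have "x \<in> last_exceedance f \<epsilon> (Max S)" unfolding last_exceedance_def by blast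
  then show ?thesis ..
qed

section \<open>The diagonal of a product of non-atomic measures\<close>

text \<open>In a finite product of copies of a non-atomic measure, two given coordinates coincide
  only on a null set (Fubini over coordinate \<open>i\<close>: each section is a singleton).\<close>
lemma product_diagonal_null:
  assumes "sigma_finite_measure M" and singletons: "\<And>y. {y} \<in> sets M"
    and atomless: "\<And>y. emeasure M {y} = 0"
    and "finite I" "i \<in> I" "j \<in> I" "i \<noteq> j"
    and diag: "{x\<in>space (PiM I (\<lambda>_. M)). x i = x j} \<in> sets (PiM I (\<lambda>_. M))"
  shows "{x\<in>space (PiM I (\<lambda>_. M)). x i = x j} \<in> null_sets (PiM I (\<lambda>_. M))"
proof -
  interpret product_sigma_finite "\<lambda>_::'i. M"
    using assms(1) by (simp add: product_sigma_finite_def)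
  define \<Delta> where "\<Delta> = {x\<in>space (PiM I (\<lambda>_. M)). x i = x j}"
  have \<Delta>: "\<Delta> \<in> sets (PiM I (\<lambda>_. M))" using diag unfolding \<Delta>_def .
  have I: "insert i (I - {i}) = I" using \<open>i \<in> I\<close> by auto
  have slice: "indicator \<Delta> (x(i := y)) = (indicator {x j} y :: ennreal)"
    if "x \<in> space (PiM (I - {i}) (\<lambda>_. M))" "y \<in> space M" for x y
    using that \<open>i \<noteq> j\<close> \<open>j \<in> I\<close> \<open>i \<in> I\<close> unfolding \<Delta>_def
    by (auto simp: indicator_def space_PiM PiE_iff extensional_def)
  have "emeasure (PiM I (\<lambda>_. M)) \<Delta> = (\<integral>\<^sup>+x. indicator \<Delta> x \<partial>PiM I (\<lambda>_. M))"
    using \<Delta> by simp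
  also have "\<dots> = (\<integral>\<^sup>+x. (\<integral>\<^sup>+y. indicator \<Delta> (x(i := y)) \<partial>M) \<partial>PiM (I - {i}) (\<lambda>_. M))"
    using product_nn_integral_insert[of "I - {i}" i "indicator \<Delta>", unfolded I] \<Delta> \<open>finite I\<close>
    by simp
  also have "\<dots> = (\<integral>\<^sup>+x. emeasure M {x j} \<partial>PiM (I - {i}) (\<lambda>_. M))"
  proof (rule nn_integral_cong)
    fix x assume "x \<in> space (PiM (I - {i}) (\<lambda>_. M))"
    then have "(\<integral>\<^sup>+y. indicator \<Delta> (x(i := y)) \<partial>M) = (\<integral>\<^sup>+y. indicator {x j} y \<partial>M)"
      by (intro nn_integral_cong) (simp add: slice)
    then show "(\<integral>\<^sup>+y. indicator \<Delta> (x(i := y)) \<partial>M) = emeasure M {x j}"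
      using singletons by simp
  qed
  also have "\<dots> = 0" using atomless by simp
  finally show ?thesis using \<Delta> unfolding \<Delta>_def by (simp add: null_sets_def)
qed

section \<open>Orbit diameters of tuples\<close>

definition orbit_diam :: "('a::metric_space \<Rightarrow> 'a) \<Rightarrow> nat \<Rightarrow> nat \<Rightarrow> (nat \<Rightarrow> 'a) \<Rightarrow> real" where
  "orbit_diam T d n x = Max {dist ((T ^^ n) (x i)) ((T ^^ n) (x j)) | i j. i < d \<and> j < d}"

lemma asymptotic_iff_orbit_diam: "asymptotic T d x \<longleftrightarrow> (\<lambda>n. orbit_diam T d n x) \<longlonglongrightarrow> 0"
  unfolding asymptotic_def orbit_diam_def ..

lemma iterate_prod_map: "i < d \<Longrightarrow> (prod_map d T ^^ k) x i = (T ^^ k) (x i)"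
  by (induction k) (auto simp: prod_map_def)

lemma orbit_diam_shift: "orbit_diam T d n ((prod_map d T ^^ k) x) = orbit_diam T d (n + k) x"
proof -
  have "(T ^^ n) ((prod_map d T ^^ k) x i) = (T ^^ (n + k)) (x i)" if "i < d" for i
    using that by (simp add: iterate_prod_map funpow_add)
  then show ?thesis unfolding orbit_diam_def by (metis (no_types, lifting))
qed

lemma orbit_diam_gt_iff:
  assumes "0 < d"
  shows "\<epsilon> < orbit_diam T d n x \<longleftrightarrow> (\<exists>i<d. \<exists>j<d. \<epsilon> < dist ((T ^^ n) (x i)) ((T ^^ n) (x j)))"
proof -
  let ?D = "{dist ((T ^^ n) (x i)) ((T ^^ n) (x j)) | i j. i < d \<and> j < d}"
  have "?D = (\<lambda>(i, j). dist ((T ^^ n) (x i)) ((T ^^ n) (x j))) ` ({..<d} \<times> {..<d})" by auto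
  then have "finite ?D" by simp
  moreover have "?D \<noteq> {}" using assms by auto
  ultimately show ?thesis unfolding orbit_diam_def by (subst Max_gr_iff) auto
qed

lemma measurable_orbit_coordinate:
  assumes "continuous_on UNIV T" and "sets M = sets borel" and "i \<in> I"
  shows "(\<lambda>x. (T ^^ n) (x i)) \<in> measurable (PiM I (\<lambda>_. M)) M"
proof -
  have "T \<in> measurable M M"
    using borel_measurable_continuous_onI[OF assms(1)] measurable_cong_sets[OF assms(2) assms(2)]
    by blast
  then have "T ^^ n \<in> measurable M M" by (rule measurable_compose_n)
  with measurable_component_singleton[OF assms(3)] show ?thesis
    by (rule measurable_comp[unfolded comp_def])
qed

lemma measurable_orbit_diam_gt:
  fixes T :: "'a::metric_space \<Rightarrow> 'a"
  assumes "compact (UNIV :: 'a set)" "continuous_on UNIV T"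
    and "sets M = sets borel" and "0 < d"
  shows "{x\<in>space (PiM {..<d} (\<lambda>_. M)). \<epsilon> < orbit_diam T d n x} \<in> sets (PiM {..<d} (\<lambda>_. M))"
proof -
  let ?P = "PiM {..<d} (\<lambda>_. M)"
  have coordinate: "(\<lambda>x. (T ^^ n) (x i)) \<in> measurable ?P M" if "i < d" for i
    using that by (intro measurable_orbit_coordinate[OF assms(2,3)]) simp
  have [measurable]: "Measurable.pred ?P (\<lambda>x. \<epsilon> < dist ((T ^^ n) (x i)) ((T ^^ n) (x j)))"
    if "i < d" "j < d" for i j
    using measurable_dist_gt[OF assms(1,3) coordinate[OF that(1)] coordinate[OF that(2)]]
    by (simp add: pred_def)
  have "{x\<in>space ?P. \<epsilon> < orbit_diam T d n x} =
      {x\<in>space ?P. \<exists>i<d. \<exists>j<d. \<epsilon> < dist ((T ^^ n) (x i)) ((T ^^ n) (x j))}"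
    using orbit_diam_gt_iff[OF assms(4)] by blast
  also have "\<dots> \<in> sets ?P" by measurable
  finally show ?thesis .
qed

lemma measurable_last_exceedance:
  fixes T :: "'a::metric_space \<Rightarrow> 'a"
  assumes "compact (UNIV :: 'a set)" "continuous_on UNIV T"
    and "sets M = sets borel" and "0 < d"
  shows "space (PiM {..<d} (\<lambda>_. M)) \<inter> last_exceedance (orbit_diam T d) \<epsilon> m \<in> sets (PiM {..<d} (\<lambda>_. M))"
proof -
  let ?P = "PiM {..<d} (\<lambda>_. M)"
  have [measurable]: "Measurable.pred ?P (\<lambda>x. \<epsilon> < orbit_diam T d n x)" for n
    using measurable_orbit_diam_gt[OF assms] by (simp add: pred_def)
  have "space ?P \<inter> last_exceedance (orbit_diam T d) \<epsilon> m =
      {x\<in>space ?P. \<epsilon> < orbit_diam T d m x \<and> (\<forall>n>m. \<not> \<epsilon> < orbit_diam T d n x)}"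
    unfolding last_exceedance_def by (auto simp: not_less)
  also have "\<dots> \<in> sets ?P" by measurable
  finally show ?thesis .
qed

lemma last_exceedance_null:
  fixes T :: "'a::metric_space \<Rightarrow> 'a"
  assumes "compact (UNIV :: 'a set)" "continuous_on UNIV T"
    and "sets M = sets borel" and "0 < d"
    and "conservative (PiM {..<d} (\<lambda>_. M)) (prod_map d T)"
  shows "space (PiM {..<d} (\<lambda>_. M)) \<inter> last_exceedance (orbit_diam T d) \<epsilon> m \<in> null_sets (PiM {..<d} (\<lambda>_. M))"
proof (rule conservative_wandering_null[OF assms(5) measurable_last_exceedance[OF assms(1-4)]])
  fix k :: nat assume "k > 0"
  then show "space (PiM {..<d} (\<lambda>_. M)) \<inter> last_exceedance (orbit_diam T d) \<epsilon> m \<inter>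
      (prod_map d T ^^ k) ` (space (PiM {..<d} (\<lambda>_. M)) \<inter> last_exceedance (orbit_diam T d) \<epsilon> m) = {}"
    using last_exceedance_wandering[where f = "orbit_diam T d", OF orbit_diam_shift] by blast
qed

lemma asymptotic_last_exceedance:
  assumes "asymptotic T d x" and "1 < d" and "x 0 \<noteq> x 1"
  shows "\<exists>j m. x \<in> last_exceedance (orbit_diam T d) (1 / real (Suc j)) m"
proof -
  have "0 < dist ((T ^^ 0) (x 0)) ((T ^^ 0) (x 1))" using assms(3) by simp
  moreover have "0 < d" using assms(2) by simp
  ultimately have "0 < orbit_diam T d 0 x" using orbit_diam_gt_iff assms(2) by blast
  then obtain j where j: "1 / real (Suc j) < orbit_diam T d 0 x" by (rule nat_approx_posE)
  have lim: "(\<lambda>n. orbit_diam T d n x) \<longlonglongrightarrow> 0" using assms(1) unfolding asymptotic_iff_orbit_diam .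
  have "0 < 1 / real (Suc j)" by simp
  then show ?thesis using last_exceedance_exists[where f = "orbit_diam T d" and x = x, OF lim j] by blast
qed

theorem mainTheorem7:
  fixes T :: "'a::metric_space \<Rightarrow> 'a" and M :: "'a measure" and d :: nat
  assumes "compact (UNIV :: 'a set)"
    and "continuous_on UNIV T"
    and "d \<ge> 2"
    and "prob_space M"
    and "sets M = sets borel"
    and "\<And>x. emeasure M {x} = 0"
    and "conservative (PiM {..<d} (\<lambda>_. M)) (prod_map d T)"
  shows "AE x in PiM {..<d} (\<lambda>_. M). \<not> asymptotic T d x"
proof -
  let ?P = "PiM {..<d} (\<lambda>_. M)"
  define D where "D \<epsilon> m = space ?P \<inter> last_exceedance (orbit_diam T d) \<epsilon> m" for \<epsilon> m
  define \<Delta> where "\<Delta> = {x\<in>space ?P. x 0 = x 1}"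
  have D_null: "D \<epsilon> m \<in> null_sets ?P" for \<epsilon> m
    unfolding D_def using last_exceedance_null[OF assms(1,2,5) _ assms(7)] assms(3) by simp
  have \<Delta>_null: "\<Delta> \<in> null_sets ?P" unfolding \<Delta>_def
    by (rule product_diagonal_null[OF prob_space_imp_sigma_finite[OF assms(4)] _ assms(6)])
      (use assms(3,5) measurable_product_diagonal[OF assms(1,5), of 0 "{..<d}" 1] in auto)
  have "{x\<in>space ?P. \<not> \<not> asymptotic T d x} \<subseteq> \<Delta> \<union> (\<Union>j. \<Union>m. D (1 / real (Suc j)) m)"
  proof
    fix x assume x: "x \<in> {x\<in>space ?P. \<not> \<not> asymptotic T d x}"
    show "x \<in> \<Delta> \<union> (\<Union>j. \<Union>m. D (1 / real (Suc j)) m)"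
    proof (cases "x 0 = x 1")
      case False
      moreover have "asymptotic T d x" "1 < d" using x assms(3) by auto
      ultimately obtain j m where "x \<in> last_exceedance (orbit_diam T d) (1 / real (Suc j)) m"
        using asymptotic_last_exceedance by blast
      with x show ?thesis unfolding D_def by blast
    qed (use x in \<open>simp add: \<Delta>_def\<close>)
  qed
  moreover have "\<Delta> \<union> (\<Union>j. \<Union>m. D (1 / real (Suc j)) m) \<in> null_sets ?P"
    using \<Delta>_null D_null by (intro null_sets.Un null_sets_UN)
  ultimately show ?thesis by (intro AE_I')
qed

end
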